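(* Let $s=2$, $n=4$, and for $a\in(0,1/8)$ set $p_{12}=p_{23}=p_{34}=p_{41}=a$ and $p_{13}=p_{24}=\frac14(1-8a)$ (with $p_{ji}=p_{ij}$). Take initial data $y_1=(X_0,0)$, $y_2=(0,X_0)$, $y_3=(-X_0,0)$, $y_4=(0,-X_0)$ with $X_0>0$, and let $Y(t)$ be the solution of the gradient flow of relative entropy. Then: (i) if $\beta(x)=(1+x)^{-1}$ and $a\in(1/10,1/8)$, there is a constant $c>0$ such that $\operatorname{diam}Y(t)\ge c\,t^{1/4}$ for all $t\ge1$; (ii) if $\beta(x)=e^{-x}$ and $a\in(1/12,1/8)$, there is a constant $c>0$ such that $\operatorname{diam}Y(t)\ge c$ for all $t\ge0$.
   Context: Let $\mathcal{P}_n=\{(i,j): i\neq j\}$ and $(p_{ij})$ a symmetric probability distribution on $\mathcal{P}_n$. For $Y=(y_1,\dots,y_n)\in(\mathbb{R}^s)^n$ define $q_{ij}=\beta(|y_i-y_j|^2)/\sum_{k\neq \ell}\beta(|y_k-y_\ell|^2)$. The gradient flow of relative entropy is the ODE system $$\frac{dy_i}{dt}=4\sum_{j\neq i}(p_{ij}-q_{ij})(y_i-y_j)(\log\beta)'(|y_i-y_j|^2),\qquad i=1,\dots,n.$$ $\operatorname{diam}Y=\max_{i,j}|y_i-y_j|$. *)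

theory Defs
  imports "HOL-Analysis.Analysis"
begin

text \<open>Configurations of n points in the plane R^2, indexed by 1..n.\<close>
type_synonym config = "nat \<Rightarrow> real^2"

definition qq :: "(real \<Rightarrow> real) \<Rightarrow> nat \<Rightarrow> config \<Rightarrow> nat \<Rightarrow> nat \<Rightarrow> real" where
  "qq \<beta> n y i j =
     \<beta> ((norm (y i - y j))^2) /
     (\<Sum>k\<in>{1..n}. \<Sum>l\<in>{1..n}-{k}. \<beta> ((norm (y k - y l))^2))"

definition flow_rhs :: "(nat \<Rightarrow> nat \<Rightarrow> real) \<Rightarrow> (real \<Rightarrow> real) \<Rightarrow> nat \<Rightarrow> config \<Rightarrow> nat \<Rightarrow> real^2" where
  "flow_rhs p \<beta> n y i =
     4 *\<^sub>R (\<Sum>j\<in>{1..n}-{i}.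
        ((p i j - qq \<beta> n y i j) * deriv (\<lambda>x. ln (\<beta> x)) ((norm (y i - y j))^2)) *\<^sub>R (y i - y j))"

definition is_flow_solution :: "(nat \<Rightarrow> nat \<Rightarrow> real) \<Rightarrow> (real \<Rightarrow> real) \<Rightarrow> nat \<Rightarrow> config \<Rightarrow> (real \<Rightarrow> config) \<Rightarrow> bool" where
  "is_flow_solution p \<beta> n Y0 Y \<longleftrightarrow>
     (\<forall>i\<in>{1..n}. Y 0 i = Y0 i) \<and>
     (\<forall>t\<ge>0. \<forall>i\<in>{1..n}. ((\<lambda>s. Y s i) has_vector_derivative flow_rhs p \<beta> n (Y t) i) (at t within {0..}))"

definition diam_conf :: "nat \<Rightarrow> config \<Rightarrow> real" where
  "diam_conf n y = Max {norm (y i - y j) | i j. i \<in> {1..n} \<and> j \<in> {1..n}}"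

definition p_ex :: "real \<Rightarrow> nat \<Rightarrow> nat \<Rightarrow> real" where
  "p_ex a i j =
     (if {i,j} \<in> {{1,2},{2,3},{3,4},{4,1}} then a
      else if {i,j} \<in> {{1,3},{2,4}} then (1 - 8*a)/4 else 0)"

definition Y0_ex :: "real \<Rightarrow> config" where
  "Y0_ex X0 i =
     (if i = 1 then vector [X0, 0] else if i = 2 then vector [0, X0]
      else if i = 3 then vector [-X0, 0] else vector [0, -X0])"

end

theory Submission
  imports Defs
begin

text \<open>
  For kernels \<open>\<beta>\<close> that are positive and have \<open>\<beta>\<close> and \<open>(log \<beta>)'\<close> locally Lipschitz, the
  vector field of the flow is locally Lipschitz, so by Gronwall solutions are unique. The weights
  and the initial square are invariant under the symmetries of the square, hence so is the
  solution: it stays a square with vertices \<open>(\<plusminus>x(t), 0), (0, \<plusminus>x(t))\<close>, its diameter is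
  \<open>2 \<bar>x\<bar>\<close>, and \<open>u = x\<^sup>2\<close> solves the autonomous equation \<open>u' = square_rate \<beta> a u\<close>.

  For \<open>\<beta> x = 1 / (1 + x)\<close> the rate is at least \<open>16 (a - 1/10) u / ((1 + 2u)(1 + 4u)) > 0\<close>, so
  \<open>u\<close> increases and \<open>(u\<^sup>2)'\<close> stays above a positive constant: \<open>u \<ge> c * sqrt t\<close>.
  For \<open>\<beta> x = exp (- x)\<close> the rate is \<open>16 u (a - 1 / (8 + 4 exp (- 2u)))\<close>, which for
  \<open>a > 1/12\<close> is nonnegative on an interval \<open>[0, z\<^sub>0]\<close>, so \<open>u\<close> never drops below \<open>min (X0\<^sup>2) z\<^sub>0\<close>.
\<close>

lemma abs_mult_diff_le:
  fixes f1 f2 g1 g2 :: real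
  assumes "\<bar>f1 - f2\<bar> \<le> A" "\<bar>g1 - g2\<bar> \<le> B" "\<bar>f2\<bar> \<le> F" "\<bar>g1\<bar> \<le> G"
  shows "\<bar>f1 * g1 - f2 * g2\<bar> \<le> A * G + F * B"
proof -
  have "f1 * g1 - f2 * g2 = (f1 - f2) * g1 + f2 * (g1 - g2)" by (simp add: algebra_simps)
  hence "\<bar>f1 * g1 - f2 * g2\<bar> \<le> \<bar>f1 - f2\<bar> * \<bar>g1\<bar> + \<bar>f2\<bar> * \<bar>g1 - g2\<bar>"
    by (simp add: abs_mult[symmetric] abs_triangle_ineq)
  also have "\<dots> \<le> A * G + F * B"
    by (intro add_mono mult_mono) (use assms in auto)
  finally show ?thesis .
qed

lemma abs_divide_diff_le:
  fixes f1 f2 g1 g2 :: real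
  assumes "\<bar>f1 - f2\<bar> \<le> A" "\<bar>g1 - g2\<bar> \<le> B" "\<bar>f2\<bar> \<le> F" "m \<le> g1" "m \<le> g2" "m > 0"
  shows "\<bar>f1 / g1 - f2 / g2\<bar> \<le> A / m + F * B / m\<^sup>2"
proof -
  have g: "g1 > 0" "g2 > 0" using assms by auto
  have "f1 / g1 - f2 / g2 = (f1 - f2) / g1 + f2 * (g2 - g1) / (g1 * g2)"
    using g by (simp add: field_simps)
  hence "\<bar>f1 / g1 - f2 / g2\<bar> \<le> \<bar>f1 - f2\<bar> / g1 + \<bar>f2\<bar> * \<bar>g1 - g2\<bar> / (g1 * g2)"
    using g by (metis (no_types, opaque_lifting) abs_divide abs_minus_commute abs_mult abs_of_pos abs_triangle_ineq mult_pos_pos)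
  also have "\<bar>f1 - f2\<bar> / g1 \<le> A / m"
    by (rule frac_le) (use assms g in auto)
  also have "\<bar>f2\<bar> * \<bar>g1 - g2\<bar> / (g1 * g2) \<le> F * B / (m * m)"
    by (intro frac_le mult_mono) (use assms in \<open>auto intro: order_trans[OF abs_ge_zero]\<close>)
  finally show ?thesis by (simp add: power2_eq_square)
qed

lemma norm_scaleR_diff_le:
  fixes v w :: "'a::real_normed_vector"
  shows "norm (c *\<^sub>R v - d *\<^sub>R w) \<le> \<bar>c - d\<bar> * norm v + \<bar>d\<bar> * norm (v - w)"
proof -
  have "c *\<^sub>R v - d *\<^sub>R w = (c - d) *\<^sub>R v + d *\<^sub>R (v - w)" by (simp add: algebra_simps)
  thus ?thesis by (metis norm_scaleR norm_triangle_ineq)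
qed

lemma has_real_derivative_inner_self:
  fixes f :: "real \<Rightarrow> 'a::real_inner"
  assumes "(f has_vector_derivative v) (at t)"
  shows "((\<lambda>s. inner (f s) (f s)) has_real_derivative 2 * inner (f t) v) (at t)"
proof -
  have d: "(f has_derivative (\<lambda>h. h *\<^sub>R v)) (at t)"
    using assms by (simp add: has_vector_derivative_def)
  have "((\<lambda>s. inner (f s) (f s)) has_derivative (\<lambda>h. inner (f t) (h *\<^sub>R v) + inner (h *\<^sub>R v) (f t))) (at t)"
    by (rule has_derivative_inner[OF d d])
  moreover have "(\<lambda>h. inner (f t) (h *\<^sub>R v) + inner (h *\<^sub>R v) (f t)) = (*) (2 * inner (f t) v)"
    by (auto simp: inner_commute algebra_simps)
  ultimately show ?thesis by (simp add: has_field_derivative_def)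
qed

lemma lipschitz_on_of_real_derivative_bound:
  fixes f f' :: "real \<Rightarrow> real"
  assumes "convex X" "\<And>x. x \<in> X \<Longrightarrow> (f has_real_derivative f' x) (at x within X)"
    and "\<And>x. x \<in> X \<Longrightarrow> \<bar>f' x\<bar> \<le> C" "C \<ge> 0"
  shows "C-lipschitz_on X f"
proof (rule bounded_derivative_imp_lipschitz[OF _ assms(1) _ assms(4)])
  fix x assume x: "x \<in> X"
  have "(\<lambda>h. h *\<^sub>R f' x) = (*) (f' x)" by (auto simp: mult.commute)
  thus "(f has_derivative (\<lambda>h. h *\<^sub>R f' x)) (at x within X)"
    using assms(2)[OF x] by (simp add: has_field_derivative_def)
  have "onorm (\<lambda>h::real. h *\<^sub>R f' x) = \<bar>f' x\<bar>"
    using onorm_scaleR_left[OF bounded_linear_ident, of "f' x"] by (simp add: onorm_id del: real_scaleR_def)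
  thus "onorm (\<lambda>h. h *\<^sub>R f' x) \<le> C" using assms(3)[OF x] by simp
qed

lemma gronwall_zero:
  fixes D D' :: "real \<Rightarrow> real"
  assumes T: "T \<ge> 0" and cont: "continuous_on {0..T} D" and D0: "D 0 = 0"
    and nonneg: "D T \<ge> 0"
    and deriv: "\<And>s. 0 < s \<Longrightarrow> s < T \<Longrightarrow> (D has_real_derivative D' s) (at s)"
    and bound: "\<And>s. 0 < s \<Longrightarrow> s < T \<Longrightarrow> D' s \<le> c * D s"
  shows "D T = 0"
proof -
  define E where "E s = D s * exp (- c * s)" for s
  have "E T \<le> E 0"
  proof (rule DERIV_nonpos_imp_decreasing_open[OF T])
    fix s assume s: "0 < s" "s < T"
    have "(E has_real_derivative D' s * exp (- c * s) + D s * (exp (- c * s) * (- c))) (at s)"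
      unfolding E_def[abs_def] by (auto intro!: derivative_eq_intros deriv s)
    moreover have "D' s * exp (- c * s) + D s * (exp (- c * s) * (- c)) = (D' s - c * D s) * exp (- c * s)"
      by (simp add: algebra_simps)
    moreover have "(D' s - c * D s) * exp (- c * s) \<le> 0"
      using bound[OF s] by (simp add: mult_nonpos_nonneg)
    ultimately show "\<exists>y. (E has_real_derivative y) (at s) \<and> y \<le> 0" by auto
  qed (unfold E_def, intro continuous_intros cont)
  hence "D T * exp (- c * T) \<le> 0" by (simp add: E_def D0)
  with nonneg show ?thesis by (simp add: mult_le_0_iff)
qed

lemma DERIV_nonneg_below_imp_ge:
  fixes u u' :: "real \<Rightarrow> real"
  assumes T: "T \<ge> 0" and cont: "continuous_on {0..T} u"
    and deriv: "\<And>t. 0 < t \<Longrightarrow> t < T \<Longrightarrow> (u has_real_derivative u' t) (at t)"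
    and below: "\<And>t. 0 < t \<Longrightarrow> t < T \<Longrightarrow> u t < m \<Longrightarrow> u' t \<ge> 0"
    and u0: "m \<le> u 0"
  shows "m \<le> u T"
proof (rule ccontr)
  assume uT: "\<not> m \<le> u T"
  define A where "A = {s \<in> {0..T}. m \<le> u s}"
  have "closed A"
    unfolding A_def by (rule continuous_on_closed_Collect_le[OF continuous_on_const cont]) simp
  moreover have "0 \<in> A" using u0 T by (simp add: A_def)
  moreover have bdd: "bdd_above A" unfolding A_def by (auto intro: bdd_aboveI[of _ T])
  ultimately have t0: "Sup A \<in> A" by (intro closed_contains_Sup) auto
  define t0 where "t0 = Sup A"
  have "0 \<le> t0" "t0 < T" "m \<le> u t0"
    using t0 uT unfolding t0_def A_def by (auto simp: le_less)
  have "u t0 \<le> u T"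
  proof (rule DERIV_nonneg_imp_increasing_open[of t0 T])
    fix s assume s: "t0 < s" "s < T"
    have "s \<notin> A" using s cSup_upper[OF _ bdd] unfolding t0_def by fastforce
    hence "u s < m" using s \<open>0 \<le> t0\<close> by (auto simp: A_def)
    thus "\<exists>y. (u has_real_derivative y) (at s) \<and> y \<ge> 0"
      using deriv below s \<open>0 \<le> t0\<close> by (meson le_less_trans)
  qed (use \<open>t0 < T\<close> \<open>0 \<le> t0\<close> in \<open>auto intro: continuous_on_subset[OF cont]\<close>)
  thus False using \<open>m \<le> u t0\<close> uT by simp
qed

lemma powr_quarter_le_sqrt:
  fixes x y :: real
  assumes "0 \<le> x" "x \<le> y\<^sup>2" "0 \<le> y"
  shows "x powr (1/4) \<le> sqrt y"
proof -
  have "x powr (1/4) \<le> (y\<^sup>2) powr (1/4)" using assms by (intro powr_mono2) auto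
  also have "\<dots> = sqrt y"
  proof (cases "y = 0")
    case False
    hence "(y\<^sup>2) powr (1/4) = (y powr 2) powr (1/4)" using assms(3) by (simp add: powr_realpow)
    also have "\<dots> = y powr (2 * (1/4))" by (rule powr_powr)
    also have "\<dots> = sqrt y" using assms(3) by (simp add: powr_half_sqrt)
    finally show ?thesis .
  qed simp
  finally show ?thesis .
qed

lemma sum_inner_le_sum_inner_self:
  fixes e v :: "nat \<Rightarrow> 'a::real_inner"
  assumes "\<forall>i\<in>{1..n}. norm (v i) \<le> L * (\<Sum>k\<in>{1..n}. norm (e k))" "L \<ge> 0"
  shows "(\<Sum>i\<in>{1..n}. 2 * inner (e i) (v i)) \<le> 2 * L * real n * (\<Sum>i\<in>{1..n}. inner (e i) (e i))"
proof -
  let ?S = "\<Sum>k\<in>{1..n}. norm (e k)"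
  have "?S\<^sup>2 \<le> (\<Sum>i\<in>{1..n}. (norm (e i))\<^sup>2) * (\<Sum>i\<in>{1..n}. 1\<^sup>2)"
    using Cauchy_Schwarz_ineq_sum[of "\<lambda>i. norm (e i)" "\<lambda>_. 1" "{1..n}"] by simp
  hence cs: "?S\<^sup>2 \<le> real n * (\<Sum>i\<in>{1..n}. inner (e i) (e i))"
    by (simp add: power2_norm_eq_inner mult.commute)
  have "(\<Sum>i\<in>{1..n}. 2 * inner (e i) (v i)) \<le> (\<Sum>i\<in>{1..n}. 2 * (norm (e i) * (L * ?S)))"
    using assms(1) by (intro sum_mono) (simp add: order_trans[OF norm_cauchy_schwarz mult_left_mono])
  also have "\<dots> = 2 * L * ?S\<^sup>2"
    by (simp add: sum_distrib_left sum_distrib_right power2_eq_square algebra_simps)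
  also have "\<dots> \<le> 2 * L * (real n * (\<Sum>i\<in>{1..n}. inner (e i) (e i)))"
    using cs assms(2) by (intro mult_left_mono) auto
  finally show ?thesis by (simp add: algebra_simps)
qed

lemma sum_Diff_reindex_bij:
  assumes "bij_betw \<sigma> A A" "k \<in> A"
  shows "(\<Sum>l\<in>A-{k}. h (\<sigma> l)) = (\<Sum>l\<in>A-{\<sigma> k}. h l)"
proof -
  have "bij_betw \<sigma> (A-{k}) (A-{\<sigma> k})"
    by (rule bij_betw_DiffI[OF assms(1)]) (use assms bij_betwE in auto)
  thus ?thesis by (rule sum.reindex_bij_betw)
qed

abbreviation log_deriv :: "(real \<Rightarrow> real) \<Rightarrow> real \<Rightarrow> real" where
  "log_deriv \<beta> \<equiv> deriv (\<lambda>x. ln (\<beta> x))"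

definition regular_kernel :: "(real \<Rightarrow> real) \<Rightarrow> bool" where
  "regular_kernel \<beta> \<longleftrightarrow> (\<forall>M\<ge>0. (\<exists>m>0. \<forall>x\<in>{0..M}. m \<le> \<beta> x) \<and>
     (\<exists>K. K-lipschitz_on {0..M} \<beta> \<and> K-lipschitz_on {0..M} (log_deriv \<beta>)))"

lemma regular_kernelE:
  assumes "regular_kernel \<beta>" "M \<ge> 0"
  obtains m K where "m > 0" "\<forall>x\<in>{0..M}. m \<le> \<beta> x"
    "K-lipschitz_on {0..M} \<beta>" "K-lipschitz_on {0..M} (log_deriv \<beta>)"
  using assms unfolding regular_kernel_def by blast

lemma log_deriv_inverse_one_plus:
  assumes "v > -1"
  shows "log_deriv (\<lambda>x. inverse (1 + x)) v = - 1 / (1 + v)"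
proof (rule DERIV_imp_deriv)
  have "1 + v > 0" using assms by simp
  moreover have "1 + (v * v + v * 2) = (1 + v) * (1 + v)" by (simp add: algebra_simps)
  ultimately have "1 + (v * v + v * 2) \<noteq> 0" by simp
  with \<open>1 + v > 0\<close> show "((\<lambda>x. ln (inverse (1 + x))) has_real_derivative - 1 / (1 + v)) (at v)"
    by (auto intro!: derivative_eq_intros simp: field_simps power2_eq_square)
qed

lemma log_deriv_exp_minus: "log_deriv (\<lambda>x. exp (- x)) v = - 1"
  by (simp add: DERIV_imp_deriv[OF DERIV_minus[OF DERIV_ident]])

lemma regular_kernel_inverse: "regular_kernel (\<lambda>x. inverse (1 + x))"
  unfolding regular_kernel_def
proof (intro allI impI conjI exI)
  fix M :: real assume "M \<ge> 0"
  have sq: "\<bar>1 / (1 + x)\<^sup>2\<bar> \<le> 1" if "x \<in> {0..M}" for x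
    using that one_le_power[of "1 + x" 2] by simp
  show "1 / (1 + M) > 0" using \<open>M \<ge> 0\<close> by simp
  show "\<forall>x\<in>{0..M}. 1 / (1 + M) \<le> inverse (1 + x)"
    by (auto simp: inverse_eq_divide intro!: frac_le)
  show "1-lipschitz_on {0..M} (\<lambda>x. inverse (1 + x))"
    by (rule lipschitz_on_of_real_derivative_bound[where f' = "\<lambda>x. - 1 / (1 + x)\<^sup>2"])
       (use sq in \<open>auto intro!: derivative_eq_intros simp: field_simps power2_eq_square\<close>)
  have "1-lipschitz_on {0..M} (\<lambda>x. - 1 / (1 + x))"
    by (rule lipschitz_on_of_real_derivative_bound[where f' = "\<lambda>x. 1 / (1 + x)\<^sup>2"])
       (use sq in \<open>auto intro!: derivative_eq_intros simp: field_simps power2_eq_square\<close>)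
  thus "1-lipschitz_on {0..M} (log_deriv (\<lambda>x. inverse (1 + x)))"
    by (rule lipschitz_on_transform) (simp add: log_deriv_inverse_one_plus)
qed

lemma regular_kernel_exp: "regular_kernel (\<lambda>x. exp (- x))"
  unfolding regular_kernel_def
proof (intro allI impI conjI exI)
  fix M :: real assume "M \<ge> 0"
  show "exp (- M) > 0" "\<forall>x\<in>{0..M}. exp (- M) \<le> exp (- x)" by auto
  show "1-lipschitz_on {0..M} (\<lambda>x. exp (- x))"
    by (rule lipschitz_on_of_real_derivative_bound[where f' = "\<lambda>x. - exp (- x)"])
       (auto intro!: derivative_eq_intros)
  show "1-lipschitz_on {0..M} (log_deriv (\<lambda>x. exp (- x)))"
    unfolding log_deriv_exp_minus by (rule lipschitz_on_mono[OF lipschitz_on_constant]) auto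
qed

section \<open>The vector field is locally Lipschitz\<close>

definition partition_sum :: "(real \<Rightarrow> real) \<Rightarrow> nat \<Rightarrow> config \<Rightarrow> real" where
  "partition_sum \<beta> n y = (\<Sum>k\<in>{1..n}. \<Sum>l\<in>{1..n}-{k}. \<beta> ((norm (y k - y l))\<^sup>2))"

lemma qq_eq_divide_partition_sum: "qq \<beta> n y i j = \<beta> ((norm (y i - y j))\<^sup>2) / partition_sum \<beta> n y"
  by (simp add: qq_def partition_sum_def)

definition conf_dist :: "nat \<Rightarrow> config \<Rightarrow> config \<Rightarrow> real" where
  "conf_dist n y z = (\<Sum>k\<in>{1..n}. norm (y k - z k))"

lemma norm_le_conf_dist:
  "k \<in> {1..n} \<Longrightarrow> norm (y k - z k) \<le> conf_dist n y z"
  unfolding conf_dist_def by (rule member_le_sum) auto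

lemma norm_diff_pair_le_conf_dist:
  assumes "i \<in> {1..n}" "j \<in> {1..n}"
  shows "norm ((y i - y j) - (z i - z j)) \<le> 2 * conf_dist n y z"
proof -
  have "norm ((y i - y j) - (z i - z j)) = norm ((y i - z i) - (y j - z j))" by (simp add: algebra_simps)
  also have "\<dots> \<le> norm (y i - z i) + norm (y j - z j)" by (rule norm_triangle_ineq4)
  also have "\<dots> \<le> 2 * conf_dist n y z"
    using norm_le_conf_dist[OF assms(1), of y z] norm_le_conf_dist[OF assms(2), of y z] by linarith
  finally show ?thesis .
qed

lemma norm_diff_pair_le:
  assumes "\<forall>k\<in>{1..n}. norm (y k) \<le> R" "i \<in> {1..n}" "j \<in> {1..n}"
  shows "norm (y i - y j) \<le> 2 * R"
proof -
  have "norm (y i) \<le> R" "norm (y j) \<le> R" using assms by auto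
  thus ?thesis using norm_triangle_ineq4[of "y i" "y j"] by linarith
qed

lemma sq_dist_pair_le:
  assumes "\<forall>k\<in>{1..n}. norm (y k) \<le> R" "i \<in> {1..n}" "j \<in> {1..n}"
  shows "(norm (y i - y j))\<^sup>2 \<in> {0..4 * R\<^sup>2}"
  using power_mono[OF norm_diff_pair_le[OF assms], of 2] by (simp add: power_mult_distrib)

lemma sq_dist_pair_diff_le:
  assumes "\<forall>k\<in>{1..n}. norm (y k) \<le> R" "\<forall>k\<in>{1..n}. norm (z k) \<le> R" "i \<in> {1..n}" "j \<in> {1..n}"
  shows "\<bar>(norm (y i - y j))\<^sup>2 - (norm (z i - z j))\<^sup>2\<bar> \<le> 8 * R * conf_dist n y z"
proof -
  let ?a = "norm (y i - y j)" and ?b = "norm (z i - z j)"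
  have "\<bar>?a - ?b\<bar> \<le> norm ((y i - y j) - (z i - z j))" by (rule norm_triangle_ineq3)
  also have "\<dots> \<le> 2 * conf_dist n y z" by (rule norm_diff_pair_le_conf_dist[OF assms(3,4)])
  finally have diff: "\<bar>?a - ?b\<bar> \<le> 2 * conf_dist n y z" .
  have sum: "?a + ?b \<le> 4 * R"
    using norm_diff_pair_le[OF assms(1,3,4)] norm_diff_pair_le[OF assms(2,3,4)] by linarith
  have "?a\<^sup>2 - ?b\<^sup>2 = (?a - ?b) * (?a + ?b)" by (simp add: power2_eq_square algebra_simps)
  hence "\<bar>?a\<^sup>2 - ?b\<^sup>2\<bar> = \<bar>?a - ?b\<bar> * (?a + ?b)" by (simp add: abs_mult)
  also have "\<dots> \<le> (2 * conf_dist n y z) * (4 * R)"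
    by (rule mult_mono[OF diff sum]) (use diff in auto)
  finally show ?thesis by (simp add: algebra_simps)
qed

lemma lipschitz_on_sq_dist:
  assumes lip: "K-lipschitz_on {0..4*R\<^sup>2} f"
    and y: "\<forall>k\<in>{1..n}. norm (y k) \<le> R" and z: "\<forall>k\<in>{1..n}. norm (z k) \<le> R"
    and ij: "i \<in> {1..n}" "j \<in> {1..n}"
  shows "\<bar>f ((norm (y i - y j))\<^sup>2) - f ((norm (z i - z j))\<^sup>2)\<bar> \<le> 8 * R * K * conf_dist n y z"
    and "\<bar>f ((norm (y i - y j))\<^sup>2)\<bar> \<le> \<bar>f 0\<bar> + 4 * K * R\<^sup>2"
proof -
  have K: "K \<ge> 0" by (rule lipschitz_on_nonneg[OF lip])
  have yy: "(norm (y i - y j))\<^sup>2 \<in> {0..4*R\<^sup>2}" by (rule sq_dist_pair_le[OF y ij])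
  have zz: "(norm (z i - z j))\<^sup>2 \<in> {0..4*R\<^sup>2}" by (rule sq_dist_pair_le[OF z ij])
  have "\<bar>f ((norm (y i - y j))\<^sup>2) - f ((norm (z i - z j))\<^sup>2)\<bar>
      \<le> K * \<bar>(norm (y i - y j))\<^sup>2 - (norm (z i - z j))\<^sup>2\<bar>"
    using lipschitz_onD[OF lip yy zz] by (simp add: dist_real_def)
  also have "\<dots> \<le> K * (8 * R * conf_dist n y z)"
    by (intro mult_left_mono sq_dist_pair_diff_le y z ij K)
  finally show "\<bar>f ((norm (y i - y j))\<^sup>2) - f ((norm (z i - z j))\<^sup>2)\<bar> \<le> 8 * R * K * conf_dist n y z"
    by (simp add: algebra_simps)
  have "0 \<in> {0..4*R\<^sup>2}" by simp
  from lipschitz_onD[OF lip yy this]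
  have "\<bar>f ((norm (y i - y j))\<^sup>2) - f 0\<bar> \<le> K * (norm (y i - y j))\<^sup>2" by (simp add: dist_real_def)
  also have "\<dots> \<le> K * (4 * R\<^sup>2)" using yy K by (intro mult_left_mono) auto
  finally show "\<bar>f ((norm (y i - y j))\<^sup>2)\<bar> \<le> \<bar>f 0\<bar> + 4 * K * R\<^sup>2" by simp
qed

lemma partition_sum_ge:
  assumes "n \<ge> 2" "\<forall>k\<in>{1..n}. \<forall>l\<in>{1..n}. m \<le> \<beta> ((norm (y k - y l))\<^sup>2)" "m > 0"
  shows "m \<le> partition_sum \<beta> n y"
proof -
  have nn: "0 \<le> \<beta> ((norm (y k - y l))\<^sup>2)" if "k \<in> {1..n}" "l \<in> {1..n}" for k l
    using assms that by (meson less_le_trans less_imp_le)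
  have "m \<le> \<beta> ((norm (y 1 - y 2))\<^sup>2)" using assms by auto
  also have "\<dots> \<le> (\<Sum>l\<in>{1..n}-{1}. \<beta> ((norm (y 1 - y l))\<^sup>2))"
    by (rule member_le_sum) (use nn assms(1) in auto)
  also have "\<dots> \<le> partition_sum \<beta> n y" unfolding partition_sum_def
    by (rule member_le_sum[of 1 "{1..n}" "\<lambda>k. \<Sum>l\<in>{1..n}-{k}. \<beta> ((norm (y k - y l))\<^sup>2)"])
       (use nn assms(1) in \<open>auto intro!: sum_nonneg\<close>)
  finally show ?thesis .
qed

lemma partition_sum_diff_le:
  assumes "\<forall>k\<in>{1..n}. \<forall>l\<in>{1..n}. \<bar>\<beta> ((norm (y k - y l))\<^sup>2) - \<beta> ((norm (z k - z l))\<^sup>2)\<bar> \<le> C"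
  shows "\<bar>partition_sum \<beta> n y - partition_sum \<beta> n z\<bar> \<le> real n * real n * C"
proof -
  have "\<bar>partition_sum \<beta> n y - partition_sum \<beta> n z\<bar>
      = \<bar>\<Sum>k\<in>{1..n}. \<Sum>l\<in>{1..n}-{k}. \<beta> ((norm (y k - y l))\<^sup>2) - \<beta> ((norm (z k - z l))\<^sup>2)\<bar>"
    unfolding partition_sum_def by (simp add: sum_subtractf)
  also have "\<dots> \<le> (\<Sum>k\<in>{1..n}. \<Sum>l\<in>{1..n}-{k}. \<bar>\<beta> ((norm (y k - y l))\<^sup>2) - \<beta> ((norm (z k - z l))\<^sup>2)\<bar>)"
    by (rule order_trans[OF sum_abs]) (intro sum_mono sum_abs)
  also have "\<dots> \<le> (\<Sum>k\<in>{1..n}. \<Sum>l\<in>{1..n}. C)"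
  proof (intro sum_mono)
    fix k assume k: "k \<in> {1..n}"
    have "C \<ge> 0" using assms k by force
    thus "(\<Sum>l\<in>{1..n}-{k}. \<bar>\<beta> ((norm (y k - y l))\<^sup>2) - \<beta> ((norm (z k - z l))\<^sup>2)\<bar>) \<le> (\<Sum>l\<in>{1..n}. C)"
      using assms k by (intro order_trans[OF sum_mono sum_mono2[of "{1..n}"]]) auto
  qed
  finally show ?thesis by simp
qed

lemma qq_lipschitz:
  assumes \<beta>: "regular_kernel \<beta>" and n: "n \<ge> 2" and R: "R \<ge> 0"
  obtains Lq Bq where "Lq \<ge> 0" "Bq \<ge> 0" and
    "\<And>y z i j. \<forall>k\<in>{1..n}. norm (y k) \<le> R \<Longrightarrow> \<forall>k\<in>{1..n}. norm (z k) \<le> R \<Longrightarrow>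
       i \<in> {1..n} \<Longrightarrow> j \<in> {1..n} \<Longrightarrow>
       \<bar>qq \<beta> n y i j - qq \<beta> n z i j\<bar> \<le> Lq * conf_dist n y z \<and> \<bar>qq \<beta> n z i j\<bar> \<le> Bq"
proof -
  have "4 * R\<^sup>2 \<ge> 0" by simp
  then obtain m K where m: "m > 0" and low: "\<forall>x\<in>{0..4*R\<^sup>2}. m \<le> \<beta> x"
    and lip: "K-lipschitz_on {0..4*R\<^sup>2} \<beta>"
    using regular_kernelE[OF \<beta>] by metis
  have K: "K \<ge> 0" by (rule lipschitz_on_nonneg[OF lip])
  define Bb where "Bb = \<bar>\<beta> 0\<bar> + 4 * K * R\<^sup>2"
  define Kd where "Kd = 8 * R * K"
  define Lz where "Lz = real n * real n * Kd"
  have Bb: "Bb \<ge> 0" and Kd: "Kd \<ge> 0" and Lz: "Lz \<ge> 0"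
    using K R by (simp_all add: Bb_def Kd_def Lz_def)
  show ?thesis
  proof (rule that[of "Kd / m + Bb * Lz / m\<^sup>2" "Bb / m"])
    show "Kd / m + Bb * Lz / m\<^sup>2 \<ge> 0" "Bb / m \<ge> 0" using m Bb Kd Lz by simp_all
    fix y z :: config and i j
    assume y: "\<forall>k\<in>{1..n}. norm (y k) \<le> R" and z: "\<forall>k\<in>{1..n}. norm (z k) \<le> R"
      and ij: "i \<in> {1..n}" "j \<in> {1..n}"
    let ?S = "conf_dist n y z"
    have S: "?S \<ge> 0" unfolding conf_dist_def by (simp add: sum_nonneg)
    have diff: "\<bar>\<beta> ((norm (y k - y l))\<^sup>2) - \<beta> ((norm (z k - z l))\<^sup>2)\<bar> \<le> Kd * ?S"
      and bound: "\<bar>\<beta> ((norm (z k - z l))\<^sup>2)\<bar> \<le> Bb"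
      if "k \<in> {1..n}" "l \<in> {1..n}" for k l
      using lipschitz_on_sq_dist[OF lip y z that] lipschitz_on_sq_dist(2)[OF lip z y that]
      unfolding Kd_def Bb_def by simp_all
    have Zy: "m \<le> partition_sum \<beta> n y"
      using low sq_dist_pair_le[OF y] by (intro partition_sum_ge[OF n _ m]) blast
    have Zz: "m \<le> partition_sum \<beta> n z"
      using low sq_dist_pair_le[OF z] by (intro partition_sum_ge[OF n _ m]) blast
    have "\<bar>partition_sum \<beta> n y - partition_sum \<beta> n z\<bar> \<le> Lz * ?S"
      using partition_sum_diff_le[of n \<beta> y z "Kd * ?S"] diff by (simp add: Lz_def)
    hence "\<bar>qq \<beta> n y i j - qq \<beta> n z i j\<bar> \<le> Kd * ?S / m + Bb * (Lz * ?S) / m\<^sup>2"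
      unfolding qq_eq_divide_partition_sum
      by (rule abs_divide_diff_le[OF diff[OF ij] _ bound[OF ij] Zy Zz m])
    also have "\<dots> = (Kd / m + Bb * Lz / m\<^sup>2) * ?S" by (simp add: field_simps)
    moreover have "\<bar>qq \<beta> n z i j\<bar> \<le> Bb / m"
      unfolding qq_eq_divide_partition_sum abs_divide
      by (rule frac_le) (use bound[OF ij] Bb Zz m in auto)
    ultimately show "\<bar>qq \<beta> n y i j - qq \<beta> n z i j\<bar> \<le> (Kd / m + Bb * Lz / m\<^sup>2) * ?S \<and> \<bar>qq \<beta> n z i j\<bar> \<le> Bb / m"
      by simp
  qed
qed

definition flow_coeff :: "(nat \<Rightarrow> nat \<Rightarrow> real) \<Rightarrow> (real \<Rightarrow> real) \<Rightarrow> nat \<Rightarrow> config \<Rightarrow> nat \<Rightarrow> nat \<Rightarrow> real" where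
  "flow_coeff p \<beta> n y i j = (p i j - qq \<beta> n y i j) * log_deriv \<beta> ((norm (y i - y j))\<^sup>2)"

lemma flow_rhs_eq_flow_coeff:
  "flow_rhs p \<beta> n y i = 4 *\<^sub>R (\<Sum>j\<in>{1..n}-{i}. flow_coeff p \<beta> n y i j *\<^sub>R (y i - y j))"
  by (simp add: flow_rhs_def flow_coeff_def)

lemma flow_coeff_lipschitz:
  assumes \<beta>: "regular_kernel \<beta>" and n: "n \<ge> 2" and R: "R \<ge> 0"
    and P: "\<forall>i\<in>{1..n}. \<forall>j\<in>{1..n}. \<bar>p i j\<bar> \<le> P"
  obtains Lc Bc where "Lc \<ge> 0" "Bc \<ge> 0" and
    "\<And>y z i j. \<forall>k\<in>{1..n}. norm (y k) \<le> R \<Longrightarrow> \<forall>k\<in>{1..n}. norm (z k) \<le> R \<Longrightarrow>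
       i \<in> {1..n} \<Longrightarrow> j \<in> {1..n} \<Longrightarrow>
       \<bar>flow_coeff p \<beta> n y i j - flow_coeff p \<beta> n z i j\<bar> \<le> Lc * conf_dist n y z \<and>
       \<bar>flow_coeff p \<beta> n z i j\<bar> \<le> Bc"
proof -
  have "4 * R\<^sup>2 \<ge> 0" by simp
  then obtain K where lip: "K-lipschitz_on {0..4*R\<^sup>2} (log_deriv \<beta>)"
    using regular_kernelE[OF \<beta>] by metis
  have K: "K \<ge> 0" by (rule lipschitz_on_nonneg[OF lip])
  obtain Lq Bq where Lq: "Lq \<ge> 0" and Bq: "Bq \<ge> 0" and q: "\<And>y z i j.
      \<forall>k\<in>{1..n}. norm (y k) \<le> R \<Longrightarrow> \<forall>k\<in>{1..n}. norm (z k) \<le> R \<Longrightarrow> i \<in> {1..n} \<Longrightarrow> j \<in> {1..n} \<Longrightarrow>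
      \<bar>qq \<beta> n y i j - qq \<beta> n z i j\<bar> \<le> Lq * conf_dist n y z \<and> \<bar>qq \<beta> n z i j\<bar> \<le> Bq"
    using qq_lipschitz[OF \<beta> n R] by blast
  have "1 \<in> {1..n}" using n by simp
  hence P0: "P \<ge> 0" using P by (meson abs_ge_zero order_trans)
  define Bw where "Bw = \<bar>log_deriv \<beta> 0\<bar> + 4 * K * R\<^sup>2"
  have Bw: "Bw \<ge> 0" using K by (simp add: Bw_def)
  show ?thesis
  proof (rule that[of "Lq * Bw + (P + Bq) * (8 * R * K)" "(P + Bq) * Bw"])
    show "Lq * Bw + (P + Bq) * (8 * R * K) \<ge> 0" "(P + Bq) * Bw \<ge> 0"
      using Lq Bw P0 Bq R K by simp_all
    fix y z :: config and i j
    assume y: "\<forall>k\<in>{1..n}. norm (y k) \<le> R" and z: "\<forall>k\<in>{1..n}. norm (z k) \<le> R"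
      and i: "i \<in> {1..n}" and j: "j \<in> {1..n}"
    let ?S = "conf_dist n y z"
    have w: "\<bar>log_deriv \<beta> ((norm (y i - y j))\<^sup>2) - log_deriv \<beta> ((norm (z i - z j))\<^sup>2)\<bar> \<le> 8 * R * K * ?S"
      "\<bar>log_deriv \<beta> ((norm (y i - y j))\<^sup>2)\<bar> \<le> Bw" "\<bar>log_deriv \<beta> ((norm (z i - z j))\<^sup>2)\<bar> \<le> Bw"
      using lipschitz_on_sq_dist[OF lip y z i j] lipschitz_on_sq_dist(2)[OF lip z y i j]
      unfolding Bw_def by simp_all
    have "\<bar>p i j\<bar> \<le> P" using P i j by blast
    hence pq: "\<bar>(p i j - qq \<beta> n y i j) - (p i j - qq \<beta> n z i j)\<bar> \<le> Lq * ?S"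
      "\<bar>p i j - qq \<beta> n z i j\<bar> \<le> P + Bq"
      using q[OF y z i j] abs_triangle_ineq4[of "p i j" "qq \<beta> n z i j"]
      by (auto simp: abs_minus_commute)
    have "\<bar>flow_coeff p \<beta> n y i j - flow_coeff p \<beta> n z i j\<bar> \<le> Lq * ?S * Bw + (P + Bq) * (8 * R * K * ?S)"
      unfolding flow_coeff_def by (rule abs_mult_diff_le[OF pq(1) w(1) pq(2) w(2)])
    moreover have "\<bar>flow_coeff p \<beta> n z i j\<bar> \<le> (P + Bq) * Bw"
      unfolding flow_coeff_def abs_mult by (rule mult_mono[OF pq(2) w(3)]) (use P0 Bq in auto)
    ultimately show "\<bar>flow_coeff p \<beta> n y i j - flow_coeff p \<beta> n z i j\<bar> \<le> (Lq * Bw + (P + Bq) * (8 * R * K)) * ?S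
        \<and> \<bar>flow_coeff p \<beta> n z i j\<bar> \<le> (P + Bq) * Bw"
      by (simp add: algebra_simps)
  qed
qed

lemma flow_rhs_lipschitz:
  assumes \<beta>: "regular_kernel \<beta>" and n: "n \<ge> 2" and R: "R \<ge> 0"
    and P: "\<forall>i\<in>{1..n}. \<forall>j\<in>{1..n}. \<bar>p i j\<bar> \<le> P"
  obtains L where "L \<ge> 0" and
    "\<And>y z i. \<forall>k\<in>{1..n}. norm (y k) \<le> R \<Longrightarrow> \<forall>k\<in>{1..n}. norm (z k) \<le> R \<Longrightarrow> i \<in> {1..n} \<Longrightarrow>
       norm (flow_rhs p \<beta> n y i - flow_rhs p \<beta> n z i) \<le> L * conf_dist n y z"
proof -
  obtain Lc Bc where Lc: "Lc \<ge> 0" and Bc: "Bc \<ge> 0" and c: "\<And>y z i j.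
      \<forall>k\<in>{1..n}. norm (y k) \<le> R \<Longrightarrow> \<forall>k\<in>{1..n}. norm (z k) \<le> R \<Longrightarrow> i \<in> {1..n} \<Longrightarrow> j \<in> {1..n} \<Longrightarrow>
      \<bar>flow_coeff p \<beta> n y i j - flow_coeff p \<beta> n z i j\<bar> \<le> Lc * conf_dist n y z \<and>
      \<bar>flow_coeff p \<beta> n z i j\<bar> \<le> Bc"
    using flow_coeff_lipschitz[OF \<beta> n R P] by blast
  show ?thesis
  proof (rule that[of "4 * real n * (2 * R * Lc + 2 * Bc)"])
    show "4 * real n * (2 * R * Lc + 2 * Bc) \<ge> 0" using R Lc Bc by simp
    fix y z :: config and i
    assume y: "\<forall>k\<in>{1..n}. norm (y k) \<le> R" and z: "\<forall>k\<in>{1..n}. norm (z k) \<le> R" and i: "i \<in> {1..n}"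
    let ?S = "conf_dist n y z" and ?c = "flow_coeff p \<beta> n"
    have S: "?S \<ge> 0" unfolding conf_dist_def by (simp add: sum_nonneg)
    have summand: "norm (?c y i j *\<^sub>R (y i - y j) - ?c z i j *\<^sub>R (z i - z j)) \<le> 2 * R * Lc * ?S + 2 * Bc * ?S"
      if j: "j \<in> {1..n}" for j
    proof -
      have "norm (?c y i j *\<^sub>R (y i - y j) - ?c z i j *\<^sub>R (z i - z j))
          \<le> \<bar>?c y i j - ?c z i j\<bar> * norm (y i - y j) + \<bar>?c z i j\<bar> * norm ((y i - y j) - (z i - z j))"
        by (rule norm_scaleR_diff_le)
      also have "\<dots> \<le> (Lc * ?S) * (2 * R) + Bc * (2 * ?S)"
        using c[OF y z i j] norm_diff_pair_le[OF y i j] norm_diff_pair_le_conf_dist[OF i j, of y z] Lc S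
        by (intro add_mono mult_mono) auto
      finally show ?thesis by (simp add: algebra_simps)
    qed
    have "norm (flow_rhs p \<beta> n y i - flow_rhs p \<beta> n z i)
        = 4 * norm (\<Sum>j\<in>{1..n}-{i}. ?c y i j *\<^sub>R (y i - y j) - ?c z i j *\<^sub>R (z i - z j))"
      unfolding flow_rhs_eq_flow_coeff by (simp add: sum_subtractf flip: scaleR_diff_right)
    also have "\<dots> \<le> 4 * (\<Sum>j\<in>{1..n}-{i}. 2 * R * Lc * ?S + 2 * Bc * ?S)"
      by (intro mult_left_mono sum_norm_le summand) auto
    also have "\<dots> \<le> 4 * (\<Sum>j\<in>{1..n}. 2 * R * Lc * ?S + 2 * Bc * ?S)"
      by (intro mult_left_mono sum_mono2) (use Lc Bc S R in auto)
    also have "\<dots> = 4 * real n * (2 * R * Lc + 2 * Bc) * ?S" by (simp add: algebra_simps)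
    finally show "norm (flow_rhs p \<beta> n y i - flow_rhs p \<beta> n z i) \<le> 4 * real n * (2 * R * Lc + 2 * Bc) * ?S" .
  qed
qed

section \<open>Uniqueness of solutions\<close>

lemma flow_solution_continuous_on:
  assumes "is_flow_solution p \<beta> n Y0 Y" "i \<in> {1..n}"
  shows "continuous_on {0..T} (\<lambda>s. Y s i)"
proof -
  have "continuous (at s within {0..}) (\<lambda>s. Y s i)" if "s \<in> {0..T}" for s
    using assms that unfolding is_flow_solution_def
    by (metis atLeastAtMost_iff has_vector_derivative_continuous)
  thus ?thesis unfolding continuous_on_eq_continuous_within
    by (meson atLeastAtMost_iff atLeast_iff continuous_within_subset subsetI)
qed

lemma flow_solution_has_vector_derivative:
  assumes "is_flow_solution p \<beta> n Y0 Y" "i \<in> {1..n}" "t > 0"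
  shows "((\<lambda>s. Y s i) has_vector_derivative flow_rhs p \<beta> n (Y t) i) (at t)"
proof -
  have "((\<lambda>s. Y s i) has_vector_derivative flow_rhs p \<beta> n (Y t) i) (at t within {0..})"
    using assms unfolding is_flow_solution_def by auto
  moreover have "at t within {0..} = at t" using assms(3) by (intro at_within_interior) simp
  ultimately show ?thesis by simp
qed

lemma flow_solution_bounded:
  assumes Y: "is_flow_solution p \<beta> n Y0 Y" and Z: "is_flow_solution p \<beta> n Y0 Z"
  obtains R where "R \<ge> 0"
    "\<And>s. s \<in> {0..T} \<Longrightarrow> (\<forall>i\<in>{1..n}. norm (Y s i) \<le> R) \<and> (\<forall>i\<in>{1..n}. norm (Z s i) \<le> R)"
proof -
  define C where "C = (\<Union>i\<in>{1..n}. (\<lambda>s. Y s i) ` {0..T}) \<union> (\<Union>i\<in>{1..n}. (\<lambda>s. Z s i) ` {0..T})"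
  have "compact C" unfolding C_def
    by (intro compact_Un compact_UN compact_continuous_image
        flow_solution_continuous_on[OF Y] flow_solution_continuous_on[OF Z]) auto
  then obtain R where "R > 0" "\<forall>x\<in>C. norm x \<le> R"
    using compact_imp_bounded bounded_pos by metis
  thus ?thesis using that[of R] unfolding C_def by fastforce
qed

lemma flow_solution_unique:
  assumes \<beta>: "regular_kernel \<beta>" and n: "n \<ge> 2"
    and Y: "is_flow_solution p \<beta> n Y0 Y" and Z: "is_flow_solution p \<beta> n Y0 Z"
    and T: "T \<ge> 0" and i: "i \<in> {1..n}"
  shows "Y T i = Z T i"
proof -
  obtain R where R: "R \<ge> 0" and bd: "\<And>s. s \<in> {0..T} \<Longrightarrow>
      (\<forall>i\<in>{1..n}. norm (Y s i) \<le> R) \<and> (\<forall>i\<in>{1..n}. norm (Z s i) \<le> R)"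
    using flow_solution_bounded[OF Y Z] by blast
  obtain P where P: "\<forall>i\<in>{1..n}. \<forall>j\<in>{1..n}. \<bar>p i j\<bar> \<le> P"
    using bdd_above_finite[of "(\<lambda>(i, j). \<bar>p i j\<bar>) ` ({1..n} \<times> {1..n})"]
    unfolding bdd_above_def by auto
  obtain L where L: "L \<ge> 0" and lip: "\<And>y z i. \<forall>k\<in>{1..n}. norm (y k) \<le> R \<Longrightarrow>
      \<forall>k\<in>{1..n}. norm (z k) \<le> R \<Longrightarrow> i \<in> {1..n} \<Longrightarrow>
      norm (flow_rhs p \<beta> n y i - flow_rhs p \<beta> n z i) \<le> L * conf_dist n y z"
    using flow_rhs_lipschitz[OF \<beta> n R P] by blast
  define D where "D s = (\<Sum>i\<in>{1..n}. inner (Y s i - Z s i) (Y s i - Z s i))" for s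
  define D' where "D' s = (\<Sum>i\<in>{1..n}. 2 * inner (Y s i - Z s i)
      (flow_rhs p \<beta> n (Y s) i - flow_rhs p \<beta> n (Z s) i))" for s
  have "D T = 0"
  proof (rule gronwall_zero[OF T, where D' = D' and c = "2 * L * real n"])
    show "continuous_on {0..T} D" unfolding D_def
      by (intro continuous_intros flow_solution_continuous_on[OF Y] flow_solution_continuous_on[OF Z]) auto
    show "D 0 = 0" "D T \<ge> 0"
      using Y Z unfolding D_def is_flow_solution_def by (auto intro: sum_nonneg)
  next
    fix s assume s: "0 < s" "s < T"
    show "(D has_real_derivative D' s) (at s)" unfolding D_def D'_def
      by (intro DERIV_sum has_real_derivative_inner_self has_vector_derivative_diff
          flow_solution_has_vector_derivative[OF Y] flow_solution_has_vector_derivative[OF Z] s) auto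
    have "s \<in> {0..T}" using s by simp
    hence "\<forall>i\<in>{1..n}. norm (flow_rhs p \<beta> n (Y s) i - flow_rhs p \<beta> n (Z s) i) \<le> L * conf_dist n (Y s) (Z s)"
      using lip bd by blast
    thus "D' s \<le> 2 * L * real n * D s"
      unfolding D_def D'_def conf_dist_def by (rule sum_inner_le_sum_inner_self[OF _ L])
  qed
  hence "\<forall>i\<in>{1..n}. inner (Y T i - Z T i) (Y T i - Z T i) = 0"
    unfolding D_def by (subst (asm) sum_nonneg_eq_0_iff) auto
  thus ?thesis using i by auto
qed

section \<open>Symmetries of the square\<close>

lemma norm_isometry_diff:
  assumes "linear f" "\<And>v. norm (f v) = norm v"
  shows "norm (f u - f v) = norm (u - v)"
  using assms linear_diff by metis

lemma partition_sum_isometry_perm: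
  assumes f: "linear f" "\<And>v. norm (f v) = norm v" and \<sigma>: "bij_betw \<sigma> {1..n} {1..n}"
  shows "partition_sum \<beta> n (\<lambda>k. f (y (\<sigma> k))) = partition_sum \<beta> n y"
proof -
  have "partition_sum \<beta> n (\<lambda>k. f (y (\<sigma> k)))
      = (\<Sum>k\<in>{1..n}. \<Sum>l\<in>{1..n}-{\<sigma> k}. \<beta> ((norm (y (\<sigma> k) - y l))\<^sup>2))"
    unfolding partition_sum_def norm_isometry_diff[OF f]
    by (intro sum.cong refl sum_Diff_reindex_bij[OF \<sigma>])
  also have "\<dots> = partition_sum \<beta> n y" unfolding partition_sum_def
    by (rule sum.reindex_bij_betw[OF \<sigma>, where g = "\<lambda>k. \<Sum>l\<in>{1..n}-{k}. \<beta> ((norm (y k - y l))\<^sup>2)"])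
  finally show ?thesis .
qed

lemma flow_rhs_isometry_perm:
  assumes f: "linear f" "\<And>v. norm (f v) = norm v" and \<sigma>: "bij_betw \<sigma> {1..n} {1..n}"
    and p: "\<forall>i\<in>{1..n}. \<forall>j\<in>{1..n}. p (\<sigma> i) (\<sigma> j) = p i j" and i: "i \<in> {1..n}"
  shows "flow_rhs p \<beta> n (\<lambda>k. f (y (\<sigma> k))) i = f (flow_rhs p \<beta> n y (\<sigma> i))"
proof -
  let ?c = "flow_coeff p \<beta> n y (\<sigma> i)"
  have "flow_coeff p \<beta> n (\<lambda>k. f (y (\<sigma> k))) i j = ?c (\<sigma> j)" if "j \<in> {1..n}" for j
    unfolding flow_coeff_def qq_eq_divide_partition_sum partition_sum_isometry_perm[OF f \<sigma>]
      norm_isometry_diff[OF f] using p i that by simp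
  hence "flow_rhs p \<beta> n (\<lambda>k. f (y (\<sigma> k))) i = 4 *\<^sub>R (\<Sum>j\<in>{1..n}-{i}. ?c (\<sigma> j) *\<^sub>R f (y (\<sigma> i) - y (\<sigma> j)))"
    unfolding flow_rhs_eq_flow_coeff by (simp add: linear_diff[OF f(1)])
  also have "\<dots> = 4 *\<^sub>R (\<Sum>j\<in>{1..n}-{\<sigma> i}. ?c j *\<^sub>R f (y (\<sigma> i) - y j))"
    using sum_Diff_reindex_bij[OF \<sigma> i, of "\<lambda>j. ?c j *\<^sub>R f (y (\<sigma> i) - y j)"] by simp
  also have "\<dots> = f (flow_rhs p \<beta> n y (\<sigma> i))"
    unfolding flow_rhs_eq_flow_coeff by (simp add: linear_sum[OF f(1)] linear_scale[OF f(1)])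
  finally show ?thesis .
qed

lemma flow_solution_isometry_perm:
  assumes f: "linear f" "\<And>v. norm (f v) = norm v" and \<sigma>: "bij_betw \<sigma> {1..n} {1..n}"
    and p: "\<forall>i\<in>{1..n}. \<forall>j\<in>{1..n}. p (\<sigma> i) (\<sigma> j) = p i j"
    and init: "\<forall>i\<in>{1..n}. f (Y0 (\<sigma> i)) = Y0 i"
    and Y: "is_flow_solution p \<beta> n Y0 Y"
  shows "is_flow_solution p \<beta> n Y0 (\<lambda>t k. f (Y t (\<sigma> k)))"
  unfolding is_flow_solution_def
proof (intro conjI allI impI ballI)
  fix i assume i: "i \<in> {1..n}"
  hence \<sigma>i: "\<sigma> i \<in> {1..n}" using \<sigma> bij_betwE by blast
  show "f (Y 0 (\<sigma> i)) = Y0 i" using Y init \<sigma>i i unfolding is_flow_solution_def by auto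
  fix t :: real assume t: "t \<ge> 0"
  have "((\<lambda>s. Y s (\<sigma> i)) has_vector_derivative flow_rhs p \<beta> n (Y t) (\<sigma> i)) (at t within {0..})"
    using Y t \<sigma>i unfolding is_flow_solution_def by auto
  hence "((\<lambda>s. f (Y s (\<sigma> i))) has_vector_derivative f (flow_rhs p \<beta> n (Y t) (\<sigma> i))) (at t within {0..})"
    by (rule bounded_linear.has_vector_derivative[OF linear_conv_bounded_linear[THEN iffD1, OF f(1)]])
  thus "((\<lambda>s. f (Y s (\<sigma> i))) has_vector_derivative flow_rhs p \<beta> n (\<lambda>k. f (Y t (\<sigma> k))) i) (at t within {0..})"
    using flow_rhs_isometry_perm[OF f \<sigma> p i] by simp
qed

definition rot90 :: "real^2 \<Rightarrow> real^2" where "rot90 v = vector [- (v$2), v$1]"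

definition reflect :: "real^2 \<Rightarrow> real^2" where "reflect v = vector [v$1, - (v$2)]"

definition cycle4 :: "nat \<Rightarrow> nat" where "cycle4 i = (if i = 1 then 4 else i - 1)"

definition swap24 :: "nat \<Rightarrow> nat" where "swap24 i = (if i = 2 then 4 else if i = 4 then 2 else i)"

lemma vec2_eq_iff: "(v::real^2) = w \<longleftrightarrow> v$1 = w$1 \<and> v$2 = w$2"
  by (simp add: vec_eq_iff forall_2)

lemma norm_vec2: "norm (v::real^2) = sqrt ((v$1)\<^sup>2 + (v$2)\<^sup>2)"
  by (simp add: norm_vec_def L2_set_def sum_2)

lemma power2_norm_vec2: "(norm (v::real^2))\<^sup>2 = (v$1)\<^sup>2 + (v$2)\<^sup>2"
  by (simp add: norm_vec2)

lemma linear_rot90: "linear rot90" unfolding linear_iff rot90_def by (simp add: vec2_eq_iff)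

lemma linear_reflect: "linear reflect" unfolding linear_iff reflect_def by (simp add: vec2_eq_iff)

lemma norm_rot90: "norm (rot90 v) = norm v" by (simp add: rot90_def norm_vec2 add.commute)

lemma norm_reflect: "norm (reflect v) = norm v" by (simp add: reflect_def norm_vec2)

lemma atLeastAtMost_1_4: "{1..4::nat} = {1,2,3,4}" by auto

lemma bij_cycle4: "bij_betw cycle4 {1..4} {1..4}"
  unfolding bij_betw_def inj_on_def atLeastAtMost_1_4 by (auto simp: cycle4_def)

lemma bij_swap24: "bij_betw swap24 {1..4} {1..4}"
  unfolding bij_betw_def inj_on_def atLeastAtMost_1_4 by (auto simp: swap24_def)

lemma in_1_4_cases: "i \<in> {1..4::nat} \<Longrightarrow> i = 1 \<or> i = 2 \<or> i = 3 \<or> i = 4"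
  by auto

lemma p_ex_cases:
  assumes "i \<in> {1..4}" "j \<in> {1..4}"
  shows "p_ex a i j = (if i = j then 0 else if even (i + j) then (1 - 8*a)/4 else a)"
  using in_1_4_cases[OF assms(1)] in_1_4_cases[OF assms(2)]
  by (elim disjE; simp add: p_ex_def doubleton_eq_iff)

lemma p_ex_cycle4: "\<forall>i\<in>{1..4}. \<forall>j\<in>{1..4}. p_ex a (cycle4 i) (cycle4 j) = p_ex a i j"
proof (intro ballI)
  fix i j :: nat assume i: "i \<in> {1..4}" and j: "j \<in> {1..4}"
  have "cycle4 i \<in> {1..4}" "cycle4 j \<in> {1..4}" using i j bij_cycle4 bij_betwE by blast+
  with i j show "p_ex a (cycle4 i) (cycle4 j) = p_ex a i j"
    using in_1_4_cases[OF i] in_1_4_cases[OF j] by (simp add: p_ex_cases) (elim disjE; simp add: cycle4_def)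
qed

lemma p_ex_swap24: "\<forall>i\<in>{1..4}. \<forall>j\<in>{1..4}. p_ex a (swap24 i) (swap24 j) = p_ex a i j"
proof (intro ballI)
  fix i j :: nat assume i: "i \<in> {1..4}" and j: "j \<in> {1..4}"
  have "swap24 i \<in> {1..4}" "swap24 j \<in> {1..4}" using i j bij_swap24 bij_betwE by blast+
  with i j show "p_ex a (swap24 i) (swap24 j) = p_ex a i j"
    using in_1_4_cases[OF i] in_1_4_cases[OF j] by (simp add: p_ex_cases) (elim disjE; simp add: swap24_def)
qed

lemma Y0_ex_rot90: "\<forall>i\<in>{1..4}. rot90 (Y0_ex x (cycle4 i)) = Y0_ex x i"
  unfolding atLeastAtMost_1_4 by (auto simp: rot90_def cycle4_def Y0_ex_def vec2_eq_iff)

lemma Y0_ex_reflect: "\<forall>i\<in>{1..4}. reflect (Y0_ex x (swap24 i)) = Y0_ex x i"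
  unfolding atLeastAtMost_1_4 by (auto simp: reflect_def swap24_def Y0_ex_def vec2_eq_iff)

text \<open>The rotation by a quarter turn (relabelling the points cyclically) and the reflection in
  the first axis (swapping points 2 and 4) map solutions to solutions and fix the data; by
  uniqueness they fix the solution itself.\<close>
lemma flow_solution_square:
  assumes \<beta>: "regular_kernel \<beta>" and Y: "is_flow_solution (p_ex a) \<beta> 4 (Y0_ex X0) Y" and t: "t \<ge> 0"
  shows "\<forall>i\<in>{1..4}. Y t i = Y0_ex (Y t 1 $ 1) i"
proof -
  have rot: "Y t i = rot90 (Y t (cycle4 i))" if "i \<in> {1..4}" for i
    using flow_solution_unique[OF \<beta> _ Y flow_solution_isometry_perm[OF linear_rot90 norm_rot90
        bij_cycle4 p_ex_cycle4 Y0_ex_rot90 Y] t that] by simp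
  have refl: "Y t 1 = reflect (Y t 1)"
    using flow_solution_unique[OF \<beta> _ Y flow_solution_isometry_perm[OF linear_reflect norm_reflect
        bij_swap24 p_ex_swap24 Y0_ex_reflect Y] t, of 1] by (simp add: swap24_def)
  have "Y t 2 = rot90 (Y t 1)" "Y t 3 = rot90 (Y t 2)" "Y t 4 = rot90 (Y t 3)"
    using rot[of 2] rot[of 3] rot[of 4] by (simp_all add: cycle4_def)
  with refl show ?thesis unfolding atLeastAtMost_1_4
    by (auto simp: Y0_ex_def vec2_eq_iff rot90_def reflect_def)
qed

section \<open>Reduction to a scalar equation\<close>

text \<open>For a square configuration with vertices \<open>(\<plusminus>x, 0), (0, \<plusminus>x)\<close> the flow moves
  \<open>u = x\<^sup>2\<close> with velocity \<open>square_rate \<beta> a u\<close>.\<close>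
definition square_rate :: "(real \<Rightarrow> real) \<Rightarrow> real \<Rightarrow> real \<Rightarrow> real" where
  "square_rate \<beta> a u = (let Z = 8 * \<beta> (2*u) + 4 * \<beta> (4*u) in
     16 * u * ((a - \<beta> (2*u) / Z) * log_deriv \<beta> (2*u) + ((1 - 8*a)/4 - \<beta> (4*u) / Z) * log_deriv \<beta> (4*u)))"

lemma sq_dist_Y0_ex:
  assumes "k \<in> {1..4}" "l \<in> {1..4}"
  shows "(norm (Y0_ex x k - Y0_ex x l))\<^sup>2 = (if k = l then 0 else if even (k + l) then 4 * x\<^sup>2 else 2 * x\<^sup>2)"
  using in_1_4_cases[OF assms(1)] in_1_4_cases[OF assms(2)]
  by (elim disjE; simp add: power2_norm_vec2 Y0_ex_def; simp add: power2_eq_square algebra_simps)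

lemma sum_1_4: "(\<Sum>k\<in>{1..4::nat}. f k) = f 1 + f 2 + f 3 + f 4"
  unfolding atLeastAtMost_1_4 by (simp add: add.assoc)

lemma atLeastAtMost_1_4_remove:
  "{1..4::nat} - {1} = {2,3,4}" "{1..4::nat} - {2} = {1,3,4}"
  "{1..4::nat} - {3} = {1,2,4}" "{1..4::nat} - {4} = {1,2,3}"
  by auto

lemma partition_sum_Y0_ex: "partition_sum \<beta> 4 (Y0_ex x) = 8 * \<beta> (2 * x\<^sup>2) + 4 * \<beta> (4 * x\<^sup>2)"
  unfolding partition_sum_def sum_1_4 atLeastAtMost_1_4_remove by (simp add: sq_dist_Y0_ex)

lemma flow_rhs_Y0_ex:
  "flow_rhs (p_ex a) \<beta> 4 (Y0_ex x) 1 $ 1 =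
     4 * x * (2 * (a - \<beta> (2 * x\<^sup>2) / (8 * \<beta> (2 * x\<^sup>2) + 4 * \<beta> (4 * x\<^sup>2))) * log_deriv \<beta> (2 * x\<^sup>2)
        + 2 * ((1 - 8*a)/4 - \<beta> (4 * x\<^sup>2) / (8 * \<beta> (2 * x\<^sup>2) + 4 * \<beta> (4 * x\<^sup>2))) * log_deriv \<beta> (4 * x\<^sup>2))"
  unfolding flow_rhs_def qq_eq_divide_partition_sum partition_sum_Y0_ex atLeastAtMost_1_4_remove
  by (simp add: sq_dist_Y0_ex p_ex_cases) (simp add: Y0_ex_def algebra_simps)

lemma flow_rhs_cong:
  assumes "\<forall>k\<in>{1..n}. y k = z k" "i \<in> {1..n}"
  shows "flow_rhs p \<beta> n y i = flow_rhs p \<beta> n z i"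
proof -
  have "partition_sum \<beta> n y = partition_sum \<beta> n z"
    unfolding partition_sum_def using assms by (intro sum.cong refl) auto
  thus ?thesis unfolding flow_rhs_def qq_eq_divide_partition_sum
    using assms by (intro arg_cong[where f="\<lambda>x. 4 *\<^sub>R x"] sum.cong refl) auto
qed

lemma diam_conf_ge_norm_diff:
  assumes "i \<in> {1..n}" "j \<in> {1..n}"
  shows "norm (y i - y j) \<le> diam_conf n y"
proof -
  have "finite {norm (y i - y j) |i j. i \<in> {1..n} \<and> j \<in> {1..n}}"
    by (rule finite_subset[of _ "(\<lambda>(i,j). norm (y i - y j)) ` ({1..n}\<times>{1..n})"]) auto
  thus ?thesis unfolding diam_conf_def by (rule Max_ge) (use assms in blast)
qed

lemma flow_rhs_Y0_ex_square_rate: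
  "2 * x * (flow_rhs (p_ex a) \<beta> 4 (Y0_ex x) 1 $ 1) = square_rate \<beta> a (x\<^sup>2)"
  unfolding flow_rhs_Y0_ex square_rate_def Let_def by (simp add: power2_eq_square algebra_simps)

lemma flow_solution_square_ode:
  assumes \<beta>: "regular_kernel \<beta>" and Y: "is_flow_solution (p_ex a) \<beta> 4 (Y0_ex X0) Y"
  defines "u \<equiv> \<lambda>t. (Y t 1 $ 1)\<^sup>2"
  shows "continuous_on {0..T} u"
    and "t > 0 \<Longrightarrow> (u has_real_derivative square_rate \<beta> a (u t)) (at t)"
    and "u 0 = X0\<^sup>2"
    and "t \<ge> 0 \<Longrightarrow> 2 * sqrt (u t) \<le> diam_conf 4 (Y t)"
proof -
  show "continuous_on {0..T} u" unfolding u_def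
    by (intro continuous_on_power continuous_on_component flow_solution_continuous_on[OF Y]) simp
  show "u 0 = X0\<^sup>2" using Y unfolding u_def is_flow_solution_def by (simp add: Y0_ex_def)
next
  assume t: "t > 0"
  have "((\<lambda>s. Y s 1) has_vector_derivative flow_rhs (p_ex a) \<beta> 4 (Y t) 1) (at t)"
    by (rule flow_solution_has_vector_derivative[OF Y _ t]) simp
  hence "((\<lambda>s. Y s 1 $ 1) has_real_derivative flow_rhs (p_ex a) \<beta> 4 (Y t) 1 $ 1) (at t)"
    unfolding has_real_derivative_iff_has_vector_derivative
    by (rule bounded_linear.has_vector_derivative[OF bounded_linear_vec_nth])
  moreover have "flow_rhs (p_ex a) \<beta> 4 (Y t) 1 = flow_rhs (p_ex a) \<beta> 4 (Y0_ex (Y t 1 $ 1)) 1"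
    by (rule flow_rhs_cong[OF flow_solution_square[OF \<beta> Y]]) (use t in simp_all)
  ultimately have "((\<lambda>s. Y s 1 $ 1) has_real_derivative flow_rhs (p_ex a) \<beta> 4 (Y0_ex (Y t 1 $ 1)) 1 $ 1) (at t)"
    by simp
  from DERIV_mult[OF this this]
  show "(u has_real_derivative square_rate \<beta> a (u t)) (at t)"
    unfolding u_def flow_rhs_Y0_ex_square_rate[symmetric] by (simp add: power2_eq_square algebra_simps)
next
  assume "t \<ge> 0"
  define x where "x = Y t 1 $ 1"
  have "\<forall>i\<in>{1..4}. Y t i = Y0_ex x i"
    unfolding x_def by (rule flow_solution_square[OF \<beta> Y \<open>t \<ge> 0\<close>])
  hence "norm (Y t 1 - Y t 3) = norm (Y0_ex x 1 - Y0_ex x 3)" by simp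
  also have "\<dots> = sqrt ((2 * x)\<^sup>2)" by (simp add: norm_vec2 Y0_ex_def power_mult_distrib)
  also have "\<dots> = 2 * \<bar>x\<bar>" by (simp only: real_sqrt_abs abs_mult)
  finally show "2 * sqrt (u t) \<le> diam_conf 4 (Y t)"
    using diam_conf_ge_norm_diff[of 1 4 3 "Y t"] unfolding u_def x_def by simp
qed

lemma square_rate_inverse:
  assumes u: "u \<ge> 0"
  shows "square_rate (\<lambda>x. inverse (1 + x)) a u
       = 16 * u * (a - (1 + 4*u) / (12 + 40*u)) / ((1 + 2*u) * (1 + 4*u))"
proof -
  define p q where "p = 1 + 2*u" and "q = 1 + 4*u"
  have pq: "p > 0" "q > 0" "8 * q + 4 * p > 0" using u unfolding p_def q_def by (auto simp: algebra_simps)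
  have ld: "log_deriv (\<lambda>x. inverse (1 + x)) (2*u) = - 1 / p" "log_deriv (\<lambda>x. inverse (1 + x)) (4*u) = - 1 / q"
    using log_deriv_inverse_one_plus u unfolding p_def q_def by simp_all
  define s where "s = 8 * q + 4 * p"
  have s: "s > 0" using pq by (simp add: s_def)
  have Z: "8 * inverse p + 4 * inverse q = s / (p * q)"
    using pq by (simp add: s_def field_simps)
  have "square_rate (\<lambda>x. inverse (1 + x)) a u
      = 16 * u * ((a - inverse p / (8 * inverse p + 4 * inverse q)) * (- 1 / p)
          + ((1 - 8*a)/4 - inverse q / (8 * inverse p + 4 * inverse q)) * (- 1 / q))"
    by (simp only: square_rate_def Let_def ld p_def q_def)
  also note Z
  also have "inverse p / (s / (p * q)) = q / s" using pq s by (simp add: field_simps)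
  also have "inverse q / (s / (p * q)) = p / s" using pq s by (simp add: field_simps)
  also have "(1 - 8*a)/4 - p / s = - 2 * (a - q / s)"
    using s by (simp add: s_def field_simps)
  also have "16 * u * ((a - q / s) * (- 1 / p) + - 2 * (a - q / s) * (- 1 / q))
      = 16 * u * (a - q / s) * (2 / q - 1 / p)"
    using pq s by (simp add: field_simps)
  also have "2 / q - 1 / p = 1 / (p * q)"
    using pq by (simp add: p_def q_def field_simps)
  also have "s = 12 + 40 * u" unfolding s_def p_def q_def by simp
  finally show ?thesis unfolding p_def q_def by simp
qed

lemma square_rate_exp:
  "square_rate (\<lambda>x. exp (- x)) a u = 16 * u * (a - 1 / (8 + 4 * exp (- 2 * u)))"
proof -
  define E where "E = exp (- 2 * u)"
  define D where "D = 8 + 4 * E"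
  have E: "E > 0" and D: "D > 0" "D - 4 * E = 8" by (simp_all add: E_def D_def add_pos_pos)
  have e4: "exp (- (4 * u)) = E * E" by (simp add: E_def flip: exp_add)
  have "square_rate (\<lambda>x. exp (- x)) a u
      = 16 * u * ((a - E / (8 * E + 4 * (E * E))) * (- 1) + ((1 - 8*a)/4 - E * E / (8 * E + 4 * (E * E))) * (- 1))"
    by (simp only: square_rate_def Let_def log_deriv_exp_minus e4 E_def mult_minus_left)
  also have "8 * E + 4 * (E * E) = E * D" by (simp add: D_def algebra_simps)
  also have "E / (E * D) = 1 / D" using E by simp
  also have "E * E / (E * D) = E / D" using E by simp
  also have "(1 - 8*a)/4 - E / D = 2 / D - 2 * a"
    using D by (simp add: field_simps)
  also have "16 * u * ((a - 1 / D) * (- 1) + (2 / D - 2 * a) * (- 1)) = 16 * u * (a - 1 / D)"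
    using D(1) by (simp add: field_simps)
  finally show ?thesis unfolding D_def E_def .
qed

lemma square_rate_inverse_ge:
  assumes "z \<ge> 0"
  shows "16 * (a - 1/10) * z / ((1 + 2*z) * (1 + 4*z)) \<le> square_rate (\<lambda>x. inverse (1 + x)) a z"
proof -
  have "(1 + 4*z) / (12 + 40*z) \<le> 1/10" using assms by (simp add: divide_simps)
  hence "16 * z * (a - 1/10) \<le> 16 * z * (a - (1 + 4*z) / (12 + 40*z))"
    using assms by (intro mult_left_mono) auto
  thus ?thesis unfolding square_rate_inverse[OF assms]
    using assms by (intro divide_right_mono) (auto simp: algebra_simps)
qed

lemma inverse_kernel_square_growth:
  assumes a: "1/10 < a" and cont: "\<And>T. continuous_on {0..T} u"
    and deriv: "\<And>t. t > 0 \<Longrightarrow> (u has_real_derivative square_rate (\<lambda>x. inverse (1 + x)) a (u t)) (at t)"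
    and nonneg: "\<And>t. u t \<ge> 0" and u0: "u 0 > 0"
  obtains \<kappa> where "\<kappa> > 0" "\<And>t. t \<ge> 0 \<Longrightarrow> \<kappa> * t \<le> (u t)\<^sup>2"
proof -
  let ?H = "square_rate (\<lambda>x. inverse (1 + x)) a"
  define \<epsilon> where "\<epsilon> = a - 1/10"
  have \<epsilon>: "\<epsilon> > 0" using a by (simp add: \<epsilon>_def)
  have H: "16 * \<epsilon> * z / ((1 + 2*z) * (1 + 4*z)) \<le> ?H z" if "z \<ge> 0" for z
    unfolding \<epsilon>_def by (rule square_rate_inverse_ge[OF that])
  have incr: "u 0 \<le> u t" if "t \<ge> 0" for t
  proof (rule DERIV_nonneg_imp_increasing_open[OF that _ cont])
    fix s :: real assume "0 < s"
    moreover have "0 \<le> 16 * \<epsilon> * u s / ((1 + 2 * u s) * (1 + 4 * u s))"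
      using \<epsilon> nonneg[of s] by simp
    ultimately show "\<exists>y. (u has_real_derivative y) (at s) \<and> y \<ge> 0"
      using deriv H[OF nonneg] order_trans by blast
  qed
  define C where "C = (1 / u 0 + 2) * (1 / u 0 + 4)"
  have C: "C > 0" using u0 by (simp add: C_def add_pos_pos)
  define \<kappa> where "\<kappa> = 32 * \<epsilon> / C"
  \<comment> \<open>Once \<open>u \<ge> u 0\<close>, the rate is of order \<open>1 / u\<close>, so \<open>u\<^sup>2\<close> grows at least linearly.\<close>
  have key: "\<kappa> \<le> 2 * z * ?H z" if z: "z \<ge> u 0" for z
  proof -
    have z0: "z > 0" using z u0 by linarith
    have "1 + 2*z \<le> z * (1 / u 0 + 2)" "1 + 4*z \<le> z * (1 / u 0 + 4)"
      using z u0 z0 by (simp_all add: field_simps)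
    hence "(1 + 2*z) * (1 + 4*z) \<le> (z * (1 / u 0 + 2)) * (z * (1 / u 0 + 4))"
      using z0 by (intro mult_mono) auto
    hence den: "(1 + 2*z) * (1 + 4*z) \<le> C * z\<^sup>2" by (simp add: C_def power2_eq_square algebra_simps)
    have "\<kappa> = 32 * \<epsilon> * z\<^sup>2 / (C * z\<^sup>2)" using z0 by (simp add: \<kappa>_def)
    also have "\<dots> \<le> 32 * \<epsilon> * z\<^sup>2 / ((1 + 2*z) * (1 + 4*z))"
      using \<epsilon> z0 C by (intro divide_left_mono den) auto
    also have "\<dots> = 2 * z * (16 * \<epsilon> * z / ((1 + 2*z) * (1 + 4*z)))" by (simp add: power2_eq_square)
    also have "\<dots> \<le> 2 * z * ?H z" using H z0 by (intro mult_left_mono) auto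
    finally show ?thesis .
  qed
  show ?thesis
  proof (rule that)
    show "\<kappa> > 0" using \<epsilon> C by (simp add: \<kappa>_def)
    fix t :: real assume t: "t \<ge> 0"
    have "(u 0)\<^sup>2 - \<kappa> * 0 \<le> (u t)\<^sup>2 - \<kappa> * t"
    proof (rule DERIV_nonneg_imp_increasing_open[OF t])
      fix s :: real assume s: "0 < s" "s < t"
      have "((\<lambda>s. (u s)\<^sup>2 - \<kappa> * s) has_real_derivative 2 * u s * ?H (u s) - \<kappa>) (at s)"
        by (auto intro!: derivative_eq_intros deriv s)
      moreover have "2 * u s * ?H (u s) - \<kappa> \<ge> 0" using key[OF incr] s by simp
      ultimately show "\<exists>y. ((\<lambda>s. (u s)\<^sup>2 - \<kappa> * s) has_real_derivative y) (at s) \<and> y \<ge> 0" by blast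
    qed (intro continuous_intros cont)
    thus "\<kappa> * t \<le> (u t)\<^sup>2" using zero_le_power2[of "u 0"] by linarith
  qed
qed

lemma exp_kernel_square_lower_bound:
  assumes a: "1/12 < a" "a < 1/8" and cont: "\<And>T. continuous_on {0..T} u"
    and deriv: "\<And>t. t > 0 \<Longrightarrow> (u has_real_derivative square_rate (\<lambda>x. exp (- x)) a (u t)) (at t)"
    and nonneg: "\<And>t. u t \<ge> 0" and u0: "u 0 > 0"
  obtains m where "m > 0" "\<And>t. t \<ge> 0 \<Longrightarrow> m \<le> u t"
proof -
  define r where "r = (1/a - 8) / 4"
  have r: "0 < r" "r < 1" using a by (simp_all add: r_def field_simps)
  define z\<^sub>0 where "z\<^sub>0 = - ln r / 2"
  have z\<^sub>0: "z\<^sub>0 > 0" using r by (simp add: z\<^sub>0_def)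
  \<comment> \<open>\<open>z\<^sub>0\<close> is the root of \<open>a = 1 / (8 + 4 * exp (- 2 * z))\<close>, i.e. \<open>exp (- 2 * z\<^sub>0) = r\<close>.\<close>
  have rate: "square_rate (\<lambda>x. exp (- x)) a z \<ge> 0" if "0 \<le> z" "z \<le> z\<^sub>0" for z
  proof -
    have "r = exp (- 2 * z\<^sub>0)" using r by (simp add: z\<^sub>0_def)
    also have "\<dots> \<le> exp (- 2 * z)" using that by simp
    finally have "1 / a \<le> 8 + 4 * exp (- 2 * z)" by (simp add: r_def)
    hence "1 / (8 + 4 * exp (- 2 * z)) \<le> a"
      using a by (simp add: divide_simps add_pos_pos mult.commute)
    thus ?thesis unfolding square_rate_exp using that by simp
  qed
  show ?thesis
  proof (rule that)
    show "min (u 0) z\<^sub>0 > 0" using u0 z\<^sub>0 by simp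
    fix t :: real assume "t \<ge> 0"
    show "min (u 0) z\<^sub>0 \<le> u t"
      by (rule DERIV_nonneg_below_imp_ge[OF \<open>t \<ge> 0\<close> cont deriv]) (auto intro!: rate nonneg)
  qed
qed

lemma diam_growth_inverse_kernel:
  assumes a: "1/10 < a" and X0: "X0 > 0"
    and Y: "is_flow_solution (p_ex a) (\<lambda>x. inverse (1 + x)) 4 (Y0_ex X0) Y"
  shows "\<exists>c>0. \<forall>t\<ge>1. c * t powr (1/4) \<le> diam_conf 4 (Y t)"
proof -
  note ode = flow_solution_square_ode[OF regular_kernel_inverse Y]
  have "(Y 0 1 $ 1)\<^sup>2 > 0" using ode(3) X0 by simp
  then obtain \<kappa> where \<kappa>: "\<kappa> > 0" "\<And>t. t \<ge> 0 \<Longrightarrow> \<kappa> * t \<le> ((Y t 1 $ 1)\<^sup>2)\<^sup>2"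
    using inverse_kernel_square_growth[OF a ode(1,2) zero_le_power2] by blast
  have "2 * \<kappa> powr (1/4) * t powr (1/4) \<le> diam_conf 4 (Y t)" if t: "t \<ge> 1" for t
  proof -
    have "\<kappa> powr (1/4) * t powr (1/4) = (\<kappa> * t) powr (1/4)" using \<kappa> t by (simp add: powr_mult)
    also have "\<dots> \<le> sqrt ((Y t 1 $ 1)\<^sup>2)" using \<kappa> t by (intro powr_quarter_le_sqrt) auto
    finally show ?thesis using ode(4)[of t] t by simp
  qed
  thus ?thesis using \<kappa>(1) by (intro exI[of _ "2 * \<kappa> powr (1/4)"]) auto
qed

lemma diam_lower_bound_exp_kernel:
  assumes a: "1/12 < a" "a < 1/8" and X0: "X0 > 0"
    and Y: "is_flow_solution (p_ex a) (\<lambda>x. exp (- x)) 4 (Y0_ex X0) Y"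
  shows "\<exists>c>0. \<forall>t\<ge>0. c \<le> diam_conf 4 (Y t)"
proof -
  note ode = flow_solution_square_ode[OF regular_kernel_exp Y]
  have "(Y 0 1 $ 1)\<^sup>2 > 0" using ode(3) X0 by simp
  then obtain m where m: "m > 0" "\<And>t. t \<ge> 0 \<Longrightarrow> m \<le> (Y t 1 $ 1)\<^sup>2"
    using exp_kernel_square_lower_bound[OF a ode(1,2) zero_le_power2] by blast
  have "2 * sqrt m \<le> diam_conf 4 (Y t)" if "t \<ge> 0" for t
    using m(2)[OF that] ode(4)[OF that] by (meson mult_left_mono real_sqrt_le_mono order_trans zero_le_numeral)
  thus ?thesis using m(1) by (intro exI[of _ "2 * sqrt m"]) auto
qed

theorem mainTheorem7:
  shows "(\<forall>a X0 Y. 1/10 < a \<and> a < 1/8 \<and> X0 > 0 \<and>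
            is_flow_solution (p_ex a) (\<lambda>x. inverse (1 + x)) 4 (Y0_ex X0) Y \<longrightarrow>
            (\<exists>c>0. \<forall>t\<ge>1. diam_conf 4 (Y t) \<ge> c * t powr (1/4)))
       \<and> (\<forall>a X0 Y. 1/12 < a \<and> a < 1/8 \<and> X0 > 0 \<and>
            is_flow_solution (p_ex a) (\<lambda>x. exp (-x)) 4 (Y0_ex X0) Y \<longrightarrow>
            (\<exists>c>0. \<forall>t\<ge>0. diam_conf 4 (Y t) \<ge> c))"
  using diam_growth_inverse_kernel diam_lower_bound_exp_kernel by blast

end
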